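(* Let $N=2^n$. For any pixel indices $(j,k)$ and $(j,k+1)$ in $\{1,\dots,N\}^2$, there are at most $6n$ discrete bivariate Haar wavelets $\mathbf{h}$ which are not constant on these indices, i.e. for which $\mathbf{h}_{j,k}\ne\mathbf{h}_{j,k+1}$.
   Context: Haar system: $H^0=\mathbf{1}_{[0,1)}$, $H^1=\mathbf{1}_{[0,1/2)}-\mathbf{1}_{[1/2,1)}$; for $e=(e_1,e_2)\in\{(0,1),(1,0),(1,1)\}$, $H^e(u,v)=H^{e_1}(u)H^{e_2}(v)$ and $H^e_{p,q}(x)=2^pH^e(2^px-q)$ for $p\ge0$, $q\in\mathbb{Z}^2\cap2^p[0,1)^2$. Identifying $\mathbf{X}\in\mathbb{C}^{N\times N}$ with the function on $[0,1)^2$ equal to $NX_{j,k}$ on $[\frac{j-1}{N},\frac jN)\times[\frac{k-1}{N},\frac kN)$, the discrete bivariate Haar wavelets are the images $\mathbf{h}^e_{p,q}$ corresponding to $H^e_{p,q}$ with $0\le p\le n-1$ (together with the constant image they form an orthonormal basis of $\mathbb{C}^{N\times N}$). *)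

theory Defs
  imports Complex_Main
begin

definition haar1 :: "nat \<Rightarrow> real \<Rightarrow> real" where
  "haar1 e t = (if e = 0 then (if 0 \<le> t \<and> t < 1 then 1 else 0)
                else (if 0 \<le> t \<and> t < 1/2 then 1 else if 1/2 \<le> t \<and> t < 1 then -1 else 0))"

definition haar_dirs :: "(nat \<times> nat) set" where
  "haar_dirs = {(0,1), (1,0), (1,1)}"

definition haar2 :: "nat \<times> nat \<Rightarrow> real \<times> real \<Rightarrow> real" where
  "haar2 e x = haar1 (fst e) (fst x) * haar1 (snd e) (snd x)"

definition haar2_pq :: "nat \<times> nat \<Rightarrow> nat \<Rightarrow> nat \<times> nat \<Rightarrow> real \<times> real \<Rightarrow> real" where
  "haar2_pq e p q x = 2 ^ p * haar2 e (2 ^ p * fst x - real (fst q), 2 ^ p * snd x - real (snd q))"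

text \<open>Discrete image (N = 2^n) corresponding to H^e_{p,q}: the function equal to N X_{j,k}
  on the pixel [(j-1)/N, j/N) x [(k-1)/N, k/N); for p \<le> n-1 the function is constant on
  each pixel, so X_{j,k} is 1/N times its value at the pixel corner ((j-1)/N, (k-1)/N).\<close>
definition haar_img :: "nat \<Rightarrow> nat \<times> nat \<Rightarrow> nat \<Rightarrow> nat \<times> nat \<Rightarrow> nat \<Rightarrow> nat \<Rightarrow> real" where
  "haar_img n e p q j k =
     haar2_pq e p q ((real j - 1) / 2 ^ n, (real k - 1) / 2 ^ n) / 2 ^ n"

definition haar_wavelets :: "nat \<Rightarrow> (nat \<Rightarrow> nat \<Rightarrow> real) set" where
  "haar_wavelets n = {haar_img n e p q | e p q.
      e \<in> haar_dirs \<and> p < n \<and> fst q < 2 ^ p \<and> snd q < 2 ^ p}"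

end

theory Submission
  imports Defs
begin

text \<open>A wavelet h^e_{p,q} vanishes outside the dyadic square of side 2^{-p} indexed by q.
  So if it takes different values at two pixels, it is nonzero at one of them, and then
  q is the level-p dyadic cell of that pixel.  For each of the n levels p and each of the two
  pixels this leaves one position q and three directions e, hence at most 2 * 3 * n wavelets.
  The bounds on the pixel indices are not needed.\<close>

definition dyadic_cell :: "nat \<Rightarrow> nat \<Rightarrow> nat \<Rightarrow> nat" where
  "dyadic_cell n p i = nat \<lfloor>(2::real) ^ p * ((real i - 1) / 2 ^ n)\<rfloor>"

lemma haar1_nonzero_imp_unit_interval: "haar1 e t \<noteq> 0 \<Longrightarrow> 0 \<le> t \<and> t < 1"
  unfolding haar1_def by (auto split: if_splits)

lemma nat_eq_nat_floor_if_shift_in_unit_interval: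
  assumes "0 \<le> t - real q" "t - real q < 1"
  shows "q = nat \<lfloor>t\<rfloor>"
proof -
  have "\<lfloor>t\<rfloor> = int q" using assms by (intro floor_unique) auto
  thus ?thesis by simp
qed

lemma haar_img_nonzero_imp_cell:
  assumes "haar_img n e p q j k \<noteq> 0"
  shows "q = (dyadic_cell n p j, dyadic_cell n p k)"
proof -
  from assms have "haar1 (fst e) (2 ^ p * ((real j - 1) / 2 ^ n) - real (fst q)) \<noteq> 0"
    and "haar1 (snd e) (2 ^ p * ((real k - 1) / 2 ^ n) - real (snd q)) \<noteq> 0"
    unfolding haar_img_def haar2_pq_def haar2_def by auto
  then have "fst q = dyadic_cell n p j" and "snd q = dyadic_cell n p k"
    unfolding dyadic_cell_def
    by (auto dest!: haar1_nonzero_imp_unit_interval intro: nat_eq_nat_floor_if_shift_in_unit_interval)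
  then show ?thesis by (simp add: prod_eq_iff)
qed

lemma haar_wavelets_nonconstant_subset:
  "{h \<in> haar_wavelets n. h j k \<noteq> h j k'} \<subseteq>
     (\<lambda>(e, p, q). haar_img n e p q) ` (haar_dirs \<times>
       ((\<lambda>p. (p, dyadic_cell n p j, dyadic_cell n p k)) ` {..<n} \<union>
        (\<lambda>p. (p, dyadic_cell n p j, dyadic_cell n p k')) ` {..<n}))"
proof
  fix h assume "h \<in> {h \<in> haar_wavelets n. h j k \<noteq> h j k'}"
  then obtain e p q where h: "h = haar_img n e p q" "e \<in> haar_dirs" "p < n"
    and nonconst: "h j k \<noteq> h j k'"
    unfolding haar_wavelets_def by auto
  from nonconst h(1) have "haar_img n e p q j k \<noteq> 0 \<or> haar_img n e p q j k' \<noteq> 0"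
    by auto
  then have "q = (dyadic_cell n p j, dyadic_cell n p k) \<or> q = (dyadic_cell n p j, dyadic_cell n p k')"
    using haar_img_nonzero_imp_cell by blast
  with h show "h \<in> (\<lambda>(e, p, q). haar_img n e p q) ` (haar_dirs \<times>
       ((\<lambda>p. (p, dyadic_cell n p j, dyadic_cell n p k)) ` {..<n} \<union>
        (\<lambda>p. (p, dyadic_cell n p j, dyadic_cell n p k')) ` {..<n}))"
    by (auto intro!: image_eqI[of _ _ "(e, p, q)"])
qed

lemma card_haar_dirs: "card haar_dirs = 3"
  unfolding haar_dirs_def by simp

theorem lemma9:
  fixes n j k :: nat
  assumes "1 \<le> j" "j \<le> 2 ^ n" "1 \<le> k" "k + 1 \<le> 2 ^ n"
  shows "card {h \<in> haar_wavelets n. h j k \<noteq> h j (k + 1)} \<le> 6 * n"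
proof -
  define P where "P = (\<lambda>p. (p, dyadic_cell n p j, dyadic_cell n p k)) ` {..<n} \<union>
                      (\<lambda>p. (p, dyadic_cell n p j, dyadic_cell n p (k + 1))) ` {..<n}"
  have "finite P" unfolding P_def by simp
  have "card P \<le> n + n"
    unfolding P_def by (rule order_trans[OF card_Un_le add_mono]) (auto intro: card_image_le[THEN order_trans])
  have "card {h \<in> haar_wavelets n. h j k \<noteq> h j (k + 1)}
        \<le> card ((\<lambda>(e, p, q). haar_img n e p q) ` (haar_dirs \<times> P))"
    using haar_wavelets_nonconstant_subset[of n j k "k + 1"] \<open>finite P\<close>
    unfolding P_def by (intro card_mono) (auto simp: haar_dirs_def)
  also have "\<dots> \<le> card (haar_dirs \<times> P)"
    by (rule card_image_le) (use \<open>finite P\<close> in \<open>simp add: haar_dirs_def\<close>)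
  also have "\<dots> = 3 * card P"
    by (simp add: card_cartesian_product card_haar_dirs)
  also have "\<dots> \<le> 6 * n"
    using \<open>card P \<le> n + n\<close> by simp
  finally show ?thesis .
qed

end
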